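(* Let $a,b>0$ with $ab<1$, let $\varphi\in\mathcal{B}_a$, $f\in\mathcal{B}_b$ and $\theta\ge0$. Then the function $g=\varphi(\Delta_\theta)f$ belongs to $\mathcal{B}_c$ with $c=b(1-ab)^{-1}$, and $$\|g\|_c\le(1-ab)^{-\theta}\|\varphi\|_a\|f\|_b.$$
   Context: For $b>0$ and entire $f$, $\|f\|_b=\sup_{k\in\mathbb{N}_0}b^{-k}|f^{(k)}(0)|$, and $\mathcal{B}_b=\{f \text{ entire}:\|f\|_b<\infty\}$. $\Delta_\theta$ is the operator $\Delta_\theta f=\theta f'+zf''$, and for entire $\varphi,f$, $\varphi(\Delta_\theta)f=\sum_{k=0}^\infty\sum_{m=0}^\infty\frac{\varphi^{(k)}(0)}{k!}\frac{f^{(m)}(0)}{m!}\Delta_\theta^kz^m$. *)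

theory Defs
  imports "HOL-Complex_Analysis.Complex_Analysis"
begin

definition entire :: "(complex \<Rightarrow> complex) \<Rightarrow> bool" where
  "entire f \<longleftrightarrow> f holomorphic_on UNIV"

definition Bseqw :: "real \<Rightarrow> (complex \<Rightarrow> complex) \<Rightarrow> nat \<Rightarrow> real" where
  "Bseqw b f k = inverse b ^ k * cmod ((deriv ^^ k) f 0)"

text \<open>The norm ||f||_b = sup_k b^(-k) |f^(k)(0)| (meaningful when the sequence is bounded).\<close>
definition Bnorm :: "real \<Rightarrow> (complex \<Rightarrow> complex) \<Rightarrow> real" where
  "Bnorm b f = (SUP k. Bseqw b f k)"

definition Bspace :: "real \<Rightarrow> (complex \<Rightarrow> complex) set" where
  "Bspace b = {f. entire f \<and> bdd_above (range (Bseqw b f))}"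

definition Delta :: "real \<Rightarrow> (complex \<Rightarrow> complex) \<Rightarrow> (complex \<Rightarrow> complex)" where
  "Delta \<theta> f = (\<lambda>z. of_real \<theta> * deriv f z + z * deriv (deriv f) z)"

definition funcalc :: "real \<Rightarrow> (complex \<Rightarrow> complex) \<Rightarrow> (complex \<Rightarrow> complex) \<Rightarrow> (complex \<Rightarrow> complex)" where
  "funcalc \<theta> \<phi> f = (\<lambda>z. \<Sum>k. \<Sum>m. ((deriv ^^ k) \<phi> 0 / fact k) * ((deriv ^^ m) f 0 / fact m)
       * ((Delta \<theta> ^^ k) (\<lambda>w. w ^ m)) z)"

end

theory Submission
  imports Defs
begin

text \<open>Since \<open>\<Delta>\<^sub>\<theta> z^m = m (\<theta> + m - 1) z^(m-1)\<close>, we get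
  \<open>\<Delta>\<^sub>\<theta>^k z^m = m!/(m-k)! (\<theta>+m-k)\<^sub>k z^(m-k)\<close>, so the coefficient of \<open>z^n\<close> in \<open>\<phi>(\<Delta>\<^sub>\<theta>)f\<close> is
  \<open>\<Sum>\<^sub>k \<phi>^(k)(0)/k! f^(n+k)(0)/n! (\<theta>+n)\<^sub>k\<close>. By the binomial series its modulus is at most
  \<open>\<parallel>\<phi>\<parallel>\<^sub>a \<parallel>f\<parallel>\<^sub>b b^n/n! \<Sum>\<^sub>k (\<theta>+n)\<^sub>k/k! (ab)^k = (1-ab)^(-\<theta>) \<parallel>\<phi>\<parallel>\<^sub>a \<parallel>f\<parallel>\<^sub>b c^n/n!\<close>.
  The same bound makes the double series absolutely convergent, which justifies collecting it by
  powers of \<open>z\<close>, and a power series whose \<open>n\<close>-th coefficient is at most \<open>K c^n/n!\<close> is entire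
  with \<open>\<parallel>\<cdot>\<parallel>\<^sub>c \<le> K\<close>.\<close>

lemma suminf_swap_dominated:
  fixes U :: "nat \<Rightarrow> nat \<Rightarrow> complex" and V :: "nat \<Rightarrow> nat \<Rightarrow> real"
  assumes UV: "\<And>k n. norm (U k n) \<le> V k n"
    and V_sums: "\<And>n. (\<lambda>k. V k n) sums W n" and W: "summable W"
  shows "(\<Sum>k. \<Sum>n. U k n) = (\<Sum>n. \<Sum>k. U k n)"
proof -
  have V_nonneg: "V k n \<ge> 0" for k n
    using UV[of k n] norm_ge_zero order_trans by blast
  have V_has_sum: "((\<lambda>k. V k n) has_sum W n) UNIV" for n
    using V_sums V_nonneg by (intro sums_nonneg_imp_has_sum) auto
  have "W n \<ge> 0" for n
    using V_sums[of n] V_nonneg by (metis sums_unique suminf_nonneg sums_summable)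
  then have "W summable_on UNIV"
    using W summable_sums sums_nonneg_imp_has_sum summable_on_def by blast
  then have "(\<lambda>(n,k). V k n) summable_on UNIV \<times> UNIV"
    by (intro summable_on_SigmaI[where g=W]) (use V_has_sum V_nonneg in auto)
  then have "(\<lambda>x. norm ((\<lambda>(n,k). U k n) x)) summable_on UNIV \<times> UNIV"
    by (rule Infinite_Sum.abs_summable_on_comparison_test') (use UV in \<open>auto simp: case_prod_unfold\<close>)
  then have U_nk: "(\<lambda>(n,k). U k n) summable_on UNIV \<times> UNIV"
    by (rule abs_summable_summable)
  then have U_kn: "(\<lambda>(k,n). U k n) summable_on UNIV \<times> UNIV"
    by (subst summable_on_swap) (simp add: case_prod_unfold)
  have infsum_eq: "infsum g UNIV = suminf g" if "g summable_on UNIV" for g :: "nat \<Rightarrow> complex"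
    by (metis that has_sum_imp_sums has_sum_infsum sums_unique)
  have "(\<Sum>k. \<Sum>n. U k n) = infsum (\<lambda>k. infsum (\<lambda>n. U k n) UNIV) UNIV"
    using summable_on_SigmaD1[of "\<lambda>k n. U k n", OF U_kn]
      summable_on_Sigma_banach[of "\<lambda>k n. U k n", OF U_kn] by (simp add: infsum_eq)
  also have "\<dots> = infsum (\<lambda>n. infsum (\<lambda>k. U k n) UNIV) UNIV"
    by (rule infsum_swap_banach) (use U_kn in simp)
  also have "\<dots> = (\<Sum>n. \<Sum>k. U k n)"
    using summable_on_SigmaD1[of "\<lambda>n k. U k n", OF U_nk]
      summable_on_Sigma_banach[of "\<lambda>n k. U k n", OF U_nk] by (simp add: infsum_eq)
  finally show ?thesis .
qed

lemma summable_exp_majorant: "summable (\<lambda>n. K * c ^ n / fact n * r ^ n :: real)"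
proof -
  have "summable (\<lambda>n. K * (inverse (fact n) * (c * r) ^ n))"
    by (intro summable_mult summable_exp)
  then show ?thesis
    by (simp add: power_mult_distrib divide_inverse mult_ac)
qed

lemma pochhammer_binomial_sums:
  fixes x y :: real
  assumes "0 \<le> y" "y < 1"
  shows "(\<lambda>k. pochhammer x k / fact k * y ^ k) sums (1 - y) powr (- x)"
proof -
  have "(\<lambda>k. ((-x) gchoose k) * (-y) ^ k) sums (1 + (-y)) powr (-x)"
    by (rule gen_binomial_real) (use assms in auto)
  moreover have "((-x) gchoose k) * (-y) ^ k = pochhammer x k / fact k * y ^ k" for k
  proof -
    have "((-x) gchoose k) * (-y) ^ k
        = ((-1) ^ k * (-1) ^ k) * (pochhammer x k / fact k * y ^ k)"
      unfolding gbinomial_pochhammer power_minus[of y] minus_minus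
      by (simp only: ac_simps times_divide_eq_right)
    then show ?thesis by simp
  qed
  ultimately show ?thesis by simp
qed

lemma pochhammer_binomial_sums_shifted:
  fixes a b \<theta> :: real
  assumes "0 \<le> a * b" "a * b < 1"
  shows "(\<lambda>k. pochhammer (\<theta> + real n) k / fact k * (a * b) ^ k)
           sums ((1 - a * b) powr (- \<theta>) / (1 - a * b) ^ n)"
proof -
  have "(1 - a * b) powr (- (\<theta> + real n)) = (1 - a * b) powr (- \<theta> - real n)"
    by simp
  also have "\<dots> = (1 - a * b) powr (- \<theta>) / (1 - a * b) ^ n"
    using assms by (simp add: powr_diff powr_realpow)
  finally show ?thesis
    using pochhammer_binomial_sums[OF assms, of "\<theta> + real n"] by simp
qed

lemma deriv_monomial: "deriv (\<lambda>w. c * w ^ j) w = c * of_nat j * w ^ (j - 1)"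
  by (rule DERIV_imp_deriv) (auto intro!: derivative_eq_intros)

lemma Delta_monomial:
  "Delta \<theta> (\<lambda>w. c * w ^ j) = (\<lambda>w. (c * of_nat j * (of_real \<theta> + of_nat j - 1)) * w ^ (j - 1))"
proof
  fix w :: complex
  have "deriv (\<lambda>w. c * w ^ j) = (\<lambda>w. (c * of_nat j) * w ^ (j - 1))"
    by (rule ext, subst deriv_monomial) simp
  then have deriv2: "deriv (deriv (\<lambda>w. c * w ^ j)) w = (c * of_nat j) * of_nat (j - 1) * w ^ (j - 1 - 1)"
    by (simp only: deriv_monomial)
  show "Delta \<theta> (\<lambda>w. c * w ^ j) w = (c * of_nat j * (of_real \<theta> + of_nat j - 1)) * w ^ (j - 1)"
  proof (cases "j \<ge> 2")
    case True
    then obtain i where "j = Suc (Suc i)"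
      by (metis add_2_eq_Suc le_Suc_ex)
    then show ?thesis
      unfolding Delta_def deriv2 deriv_monomial by (simp add: algebra_simps)
  next
    case False
    then have "j = 0 \<or> j = 1" by auto
    then show ?thesis
      unfolding Delta_def deriv2 deriv_monomial by auto
  qed
qed

definition Delta_power_coeff :: "real \<Rightarrow> nat \<Rightarrow> nat \<Rightarrow> real" where
  "Delta_power_coeff \<theta> m k =
     (if k \<le> m then fact m / fact (m - k) * pochhammer (\<theta> + real (m - k)) k else 0)"

lemma Delta_power_coeff_Suc:
  "Delta_power_coeff \<theta> m k * real (m - k) * (\<theta> + real (m - k) - 1) = Delta_power_coeff \<theta> m (Suc k)"
proof (cases "Suc k \<le> m")
  case True
  define r where "r = m - Suc k"
  have m_minus_k: "m - k = Suc r"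
    using True by (simp add: r_def)
  define P where "P = pochhammer (\<theta> + real (Suc r)) k"
  have "pochhammer (\<theta> + real r) (Suc k) = (\<theta> + real r) * P"
    unfolding P_def pochhammer_rec by (simp add: ac_simps)
  then have coeff_Suc: "Delta_power_coeff \<theta> m (Suc k) = fact m / fact r * ((\<theta> + real r) * P)"
    using True by (simp add: Delta_power_coeff_def r_def[symmetric])
  have coeff: "Delta_power_coeff \<theta> m k = fact m / fact (Suc r) * P"
    using True by (simp add: Delta_power_coeff_def m_minus_k P_def)
  have "fact (Suc r) = real (Suc r) * (fact r :: real)" "(fact r :: real) \<noteq> 0"
    by auto
  then show ?thesis
    unfolding coeff coeff_Suc m_minus_k
    by (simp add: field_simps del: of_nat_Suc) (simp add: algebra_simps)
next
  case False
  then show ?thesis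
    by (auto simp: Delta_power_coeff_def)
qed

lemma Delta_iterate_power:
  "(Delta \<theta> ^^ k) (\<lambda>w. w ^ m) = (\<lambda>w. of_real (Delta_power_coeff \<theta> m k) * w ^ (m - k))"
proof (induction k)
  case 0
  then show ?case by (simp add: Delta_power_coeff_def)
next
  case (Suc k)
  have "(Delta \<theta> ^^ Suc k) (\<lambda>w. w ^ m) = Delta \<theta> ((Delta \<theta> ^^ k) (\<lambda>w. w ^ m))"
    by simp
  also have "\<dots> = (\<lambda>w. of_real (Delta_power_coeff \<theta> m k * real (m - k) * (\<theta> + real (m - k) - 1))
                        * w ^ (m - Suc k))"
    unfolding Suc Delta_monomial by (simp add: mult.assoc)
  finally show ?case
    by (simp add: Delta_power_coeff_Suc)
qed

lemma Bseqw_le_Bnorm: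
  assumes "g \<in> Bspace r"
  shows "Bseqw r g k \<le> Bnorm r g"
  unfolding Bnorm_def by (rule cSUP_upper) (use assms in \<open>auto simp: Bspace_def\<close>)

lemma Bnorm_nonneg:
  assumes "g \<in> Bspace r"
  shows "0 \<le> Bnorm r g"
  using Bseqw_le_Bnorm[OF assms, of 0] by (simp add: Bseqw_def) (meson norm_ge_zero order_trans)

lemma Bspace_deriv_bound:
  assumes "g \<in> Bspace r" "r > 0"
  shows "cmod ((deriv ^^ k) g 0) \<le> Bnorm r g * r ^ k"
proof -
  have "cmod ((deriv ^^ k) g 0) = r ^ k * Bseqw r g k"
    using assms(2) by (simp add: Bseqw_def power_inverse field_simps)
  also have "\<dots> \<le> r ^ k * Bnorm r g"
    using Bseqw_le_Bnorm[OF assms(1)] assms(2) by (intro mult_left_mono) auto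
  finally show ?thesis
    by (simp add: mult.commute)
qed

lemma power_series_in_Bspace:
  fixes g :: "complex \<Rightarrow> complex" and s :: "nat \<Rightarrow> complex"
  assumes "c > 0"
    and g: "\<And>z. g z = (\<Sum>n. s n * z ^ n)"
    and bound: "\<And>n. norm (s n) \<le> K * c ^ n / fact n"
  shows "g \<in> Bspace c \<and> Bnorm c g \<le> K"
proof -
  have g_fps: "g = eval_fps (Abs_fps s)"
    by (rule ext) (simp add: g eval_fps_def)
  have "fps_conv_radius (Abs_fps s) = \<infinity>"
    unfolding fps_conv_radius_def
  proof (rule conv_radius_inftyI'')
    fix z :: complex
    show "summable (\<lambda>n. fps_nth (Abs_fps s) n * z ^ n)"
    proof (rule summable_comparison_test'[OF summable_exp_majorant[of K c "norm z"]])
      show "norm (fps_nth (Abs_fps s) n * z ^ n) \<le> K * c ^ n / fact n * norm z ^ n" for n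
        unfolding fps_nth_Abs_fps norm_mult norm_power by (intro mult_right_mono bound) simp
    qed
  qed
  then have entire: "entire g" and deriv_eq: "(deriv ^^ n) g 0 = fact n * s n" for n
    using holomorphic_on_eval_fps fps_nth_conv_deriv[of "Abs_fps s" n]
    by (auto simp: entire_def g_fps field_simps)
  have Bseqw_le: "Bseqw c g n \<le> K" for n
  proof -
    have "Bseqw c g n = inverse c ^ n * (fact n * norm (s n))"
      by (simp add: Bseqw_def deriv_eq norm_mult)
    also have "\<dots> \<le> inverse c ^ n * (fact n * (K * c ^ n / fact n))"
      using bound \<open>c > 0\<close> by (intro mult_left_mono) auto
    also have "\<dots> = K"
      using \<open>c > 0\<close> by (simp add: power_inverse field_simps)
    finally show ?thesis .
  qed
  then have "bdd_above (range (Bseqw c g))"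
    by (intro bdd_aboveI[of _ K]) auto
  moreover have "Bnorm c g \<le> K"
    unfolding Bnorm_def by (rule cSUP_least) (use Bseqw_le in auto)
  ultimately show ?thesis
    using entire by (simp add: Bspace_def)
qed

definition funcalc_coeff ::
    "real \<Rightarrow> (complex \<Rightarrow> complex) \<Rightarrow> (complex \<Rightarrow> complex) \<Rightarrow> nat \<Rightarrow> nat \<Rightarrow> complex" where
  "funcalc_coeff \<theta> \<phi> f k n = (deriv ^^ k) \<phi> 0 / fact k * ((deriv ^^ (n + k)) f 0 / fact (n + k))
      * of_real (Delta_power_coeff \<theta> (n + k) k)"

lemma funcalc_term_power_series:
  "(\<Sum>m. (deriv ^^ k) \<phi> 0 / fact k * ((deriv ^^ m) f 0 / fact m) * (Delta \<theta> ^^ k) (\<lambda>w. w ^ m) z)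
     = (\<Sum>n. funcalc_coeff \<theta> \<phi> f k n * z ^ n)"
proof -
  define T where "T m = (deriv ^^ k) \<phi> 0 / fact k * ((deriv ^^ m) f 0 / fact m)
      * (Delta \<theta> ^^ k) (\<lambda>w. w ^ m) z" for m
  have "T m = 0" if "m < k" for m
    using that by (simp add: T_def Delta_iterate_power Delta_power_coeff_def)
  then have "suminf T = (\<Sum>n. T (n + k))"
    by (simp add: suminf_def sums_zero_iff_shift)
  also have "(\<lambda>n. T (n + k)) = (\<lambda>n. funcalc_coeff \<theta> \<phi> f k n * z ^ n)"
    by (rule ext) (simp add: T_def Delta_iterate_power funcalc_coeff_def mult_ac)
  finally show ?thesis
    by (simp add: T_def)
qed

lemma funcalc_coeff_bound:
  assumes "\<phi> \<in> Bspace a" "f \<in> Bspace b" "a > 0" "b > 0" "\<theta> \<ge> 0"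
  shows "norm (funcalc_coeff \<theta> \<phi> f k n)
           \<le> Bnorm a \<phi> * Bnorm b f * b ^ n / fact n * (pochhammer (\<theta> + real n) k / fact k * (a * b) ^ k)"
proof -
  have poch_nonneg: "0 \<le> pochhammer (\<theta> + real n) k"
    unfolding pochhammer_prod by (rule prod_nonneg) (use assms(5) in auto)
  have "Delta_power_coeff \<theta> (n + k) k = fact (n + k) / fact n * pochhammer (\<theta> + real n) k"
    by (simp add: Delta_power_coeff_def)
  then have "norm (funcalc_coeff \<theta> \<phi> f k n)
      = cmod ((deriv ^^ k) \<phi> 0) / fact k * (cmod ((deriv ^^ (n + k)) f 0) / fact (n + k))
          * (fact (n + k) / fact n * pochhammer (\<theta> + real n) k)"
    using poch_nonneg by (simp add: funcalc_coeff_def norm_mult norm_divide)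
  also have "\<dots> \<le> (Bnorm a \<phi> * a ^ k) / fact k * ((Bnorm b f * b ^ (n + k)) / fact (n + k))
          * (fact (n + k) / fact n * pochhammer (\<theta> + real n) k)"
    using Bspace_deriv_bound[OF assms(1,3), of k] Bspace_deriv_bound[OF assms(2,4), of "n + k"]
      Bnorm_nonneg[OF assms(1)] Bnorm_nonneg[OF assms(2)] poch_nonneg assms(3,4)
    by (intro mult_right_mono mult_mono divide_right_mono) auto
  also have "\<dots> = Bnorm a \<phi> * Bnorm b f * b ^ n / fact n * (pochhammer (\<theta> + real n) k / fact k * (a * b) ^ k)"
    by (simp add: power_add power_mult_distrib field_simps)
  finally show ?thesis .
qed

lemma funcalc_in_Bspace_if_dominated:
  assumes "c > 0"
    and dominated: "\<And>k n. norm (funcalc_coeff \<theta> \<phi> f k n) \<le> B k n"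
    and majorant_sums: "\<And>n. (\<lambda>k. B k n) sums (K * c ^ n / fact n)"
  shows "funcalc \<theta> \<phi> f \<in> Bspace c \<and> Bnorm c (funcalc \<theta> \<phi> f) \<le> K"
proof -
  define s where "s n = (\<Sum>k. funcalc_coeff \<theta> \<phi> f k n)" for n
  have norm_summable: "summable (\<lambda>k. norm (funcalc_coeff \<theta> \<phi> f k n))" for n
    by (rule summable_comparison_test'[OF sums_summable[OF majorant_sums]]) (use dominated in auto)
  have s_bound: "norm (s n) \<le> K * c ^ n / fact n" for n
  proof -
    have "norm (s n) \<le> (\<Sum>k. norm (funcalc_coeff \<theta> \<phi> f k n))"
      unfolding s_def by (rule summable_norm[OF norm_summable])
    also have "\<dots> \<le> (\<Sum>k. B k n)"
      by (rule suminf_le[OF dominated norm_summable sums_summable[OF majorant_sums]])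
    finally show ?thesis
      using majorant_sums[of n] by (simp add: sums_iff)
  qed
  have "funcalc \<theta> \<phi> f z = (\<Sum>n. s n * z ^ n)" for z
  proof -
    have "funcalc \<theta> \<phi> f z = (\<Sum>k. \<Sum>n. funcalc_coeff \<theta> \<phi> f k n * z ^ n)"
      unfolding funcalc_def by (simp only: funcalc_term_power_series)
    also have "\<dots> = (\<Sum>n. \<Sum>k. funcalc_coeff \<theta> \<phi> f k n * z ^ n)"
    proof (rule suminf_swap_dominated)
      show "norm (funcalc_coeff \<theta> \<phi> f k n * z ^ n) \<le> B k n * norm z ^ n" for k n
        unfolding norm_mult norm_power by (intro mult_right_mono dominated) simp
      show "(\<lambda>k. B k n * norm z ^ n) sums (K * c ^ n / fact n * norm z ^ n)" for n
        by (rule sums_mult2[OF majorant_sums])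
    qed (rule summable_exp_majorant)
    also have "\<dots> = (\<Sum>n. s n * z ^ n)"
      using summable_norm_cancel[OF norm_summable] by (simp add: s_def suminf_mult2)
    finally show ?thesis .
  qed
  then show ?thesis
    using power_series_in_Bspace \<open>c > 0\<close> s_bound by blast
qed

theorem proposition1p4:
  fixes a b \<theta> :: real and \<phi> f :: "complex \<Rightarrow> complex"
  assumes "a > 0" and "b > 0" and "a * b < 1"
    and "\<phi> \<in> Bspace a" and "f \<in> Bspace b" and "\<theta> \<ge> 0"
  shows "funcalc \<theta> \<phi> f \<in> Bspace (b / (1 - a * b))
    \<and> Bnorm (b / (1 - a * b)) (funcalc \<theta> \<phi> f)
        \<le> (1 - a * b) powr (- \<theta>) * Bnorm a \<phi> * Bnorm b f"
proof (rule funcalc_in_Bspace_if_dominated)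
  show "b / (1 - a * b) > 0"
    using assms(2,3) by simp
  show "norm (funcalc_coeff \<theta> \<phi> f k n)
          \<le> Bnorm a \<phi> * Bnorm b f * b ^ n / fact n * (pochhammer (\<theta> + real n) k / fact k * (a * b) ^ k)"
    for k n
    using funcalc_coeff_bound assms by blast
  show "(\<lambda>k. Bnorm a \<phi> * Bnorm b f * b ^ n / fact n * (pochhammer (\<theta> + real n) k / fact k * (a * b) ^ k))
          sums ((1 - a * b) powr (- \<theta>) * Bnorm a \<phi> * Bnorm b f * (b / (1 - a * b)) ^ n / fact n)"
    for n
    using sums_mult[OF pochhammer_binomial_sums_shifted[of a b \<theta> n],
        where c = "Bnorm a \<phi> * Bnorm b f * b ^ n / fact n"]
      assms(1-3) by (simp add: power_divide mult_ac)
qed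

end
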